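(* Consider Algorithm FoBa-obj with parameter $\delta>0$, and let $\beta^{(k)}$ with support $F^{(k)}$ be the iterate at the beginning of some iteration with $k\ge1$ (not necessarily the output). Then for any $\bar\beta\in\mathbb{R}^d$ with support $\bar F$, $$\|\beta^{(k)}_{F^{(k)}-\bar F}\|^2=\|(\beta^{(k)}-\bar\beta)_{F^{(k)}-\bar F}\|^2\ge\frac{\delta^{(k)}}{\rho_+(1)}|F^{(k)}-\bar F|\ge\frac{\delta}{\rho_+(1)}|F^{(k)}-\bar F|.$$
   Context: Let $Q:\mathbb{R}^d\to\mathbb{R}$ be convex and continuously differentiable. $e_j$ is the $j$-th standard basis vector, $\mathrm{supp}(\beta)=\{j:\beta_j\ne0\}$, $\|\beta\|_0=|\mathrm{supp}(\beta)|$, $\|\cdot\|$ is the Euclidean norm, $A-B$ is set difference, and $v_S$ is $v$ restricted to the coordinates in $S$. For $F\subseteq\{1,\dots,d\}$, $\hat\beta(F)$ denotes a minimizer of $Q$ over $\{\beta:\mathrm{supp}(\beta)\subseteq F\}$ (assumed to exist). For a positive integer $s$, the restricted strong convexity constants $\rho_-(s),\rho_+(s)>0$ are constants such that for all $\beta,\beta'\in\mathbb{R}^d$ with $\|\beta'-\beta\|_0\le s$: $\frac{\rho_-(s)}{2}\|\beta'-\beta\|^2\le Q(\beta')-Q(\beta)-\langle\nabla Q(\beta),\beta'-\beta\rangle\le\frac{\rho_+(s)}{2}\|\beta'-\beta\|^2.$ Algorithm FoBa has two variants: FoBa-obj (parameter $\delta>0$) and FoBa-gdt (parameter $\epsilon>0$).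 Initialize $F^{(0)}=\emptyset$, $\beta^{(0)}=0$, $k=0$, and repeat the following iteration. (1) Stopping test: FoBa-obj stops if $Q(\beta^{(k)})-\min_{\alpha\in\mathbb{R},\,j\notin F^{(k)}}Q(\beta^{(k)}+\alpha e_j)<\delta$; FoBa-gdt stops if $\|\nabla Q(\beta^{(k)})\|_\infty<\epsilon$. On stopping the output is $\beta^{(k)}$ with support $F^{(k)}$, and the algorithm is said to terminate at $k$. (2) Forward step: FoBa-obj picks $i^{(k)}\in\arg\min_{i\notin F^{(k)}}\min_\alpha Q(\beta^{(k)}+\alpha e_i)$; FoBa-gdt picks $i^{(k)}\in\arg\max_{i\notin F^{(k)}}|\nabla Q(\beta^{(k)})_i|$. Set $F^{(k+1)}=F^{(k)}\cup\{i^{(k)}\}$, $\beta^{(k+1)}=\hat\beta(F^{(k+1)})$, $\delta^{(k+1)}=Q(\beta^{(k)})-Q(\beta^{(k+1)})$, $k\leftarrow k+1$. (3) Backward step: repeat — if $F^{(k)}=\emptyset$ or $\min_{i\in F^{(k)}}Q(\beta^{(k)}-\beta^{(k)}_ie_i)-Q(\beta^{(k)})\ge\delta^{(k)}/2$, leave the backward step; otherwise pick $j\in\arg\min_{i\in F^{(k)}}Q(\beta^{(k)}-\beta^{(k)}_ie_i)$, set $F^{(k-1)}=F^{(k)}-\{j\}$, $\beta^{(k-1)}=\hat\beta(F^{(k-1)})$, $k\leftarrow k-1$ (where $\delta^{(k-1)}$ is the value recorded at the most recent forward step producing index $k-1$). Thus $|F^{(k)}|=k$ always. "At the beginning of an iteration"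 means the state just before a stopping test. *)

theory Defs
  imports "HOL-Analysis.Analysis"
begin

text \<open>Coordinates are indexed by a finite type 'n (so R^d = real^'n, d = CARD('n)).\<close>

definition e :: "'n::finite \<Rightarrow> real^'n" where
  "e j = axis j 1"

definition supp :: "real^'n::finite \<Rightarrow> 'n set" where
  "supp b = {j. b $ j \<noteq> 0}"

definition l0 :: "real^'n::finite \<Rightarrow> nat" where
  "l0 b = card (supp b)"

text \<open>Restricted strong convexity at sparsity level s with constants rm = rho_-(s), rp = rho_+(s).\<close>
definition rsc :: "(real^'n::finite \<Rightarrow> real) \<Rightarrow> (real^'n \<Rightarrow> real^'n) \<Rightarrow> nat \<Rightarrow> real \<Rightarrow> real \<Rightarrow> bool" where
  "rsc Q gQ s rm rp \<longleftrightarrow> 0 < rm \<and> 0 < rp \<and>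
     (\<forall>b b'. l0 (b' - b) \<le> s \<longrightarrow>
        rm / 2 * (norm (b' - b))\<^sup>2 \<le> Q b' - Q b - gQ b \<bullet> (b' - b) \<and>
        Q b' - Q b - gQ b \<bullet> (b' - b) \<le> rp / 2 * (norm (b' - b))\<^sup>2)"

definition restr_min :: "(real^'n::finite \<Rightarrow> real) \<Rightarrow> 'n set \<Rightarrow> real^'n \<Rightarrow> bool" where
  "restr_min Q F b \<longleftrightarrow> supp b \<subseteq> F \<and> (\<forall>b'. supp b' \<subseteq> F \<longrightarrow> Q b \<le> Q b')"

definition line_min :: "(real^'n::finite \<Rightarrow> real) \<Rightarrow> real^'n \<Rightarrow> 'n \<Rightarrow> real" where
  "line_min Q b j = (INF \<alpha>::real. Q (b + \<alpha> *\<^sub>R e j))"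

definition obj_stop :: "(real^'n::finite \<Rightarrow> real) \<Rightarrow> real \<Rightarrow> 'n set \<Rightarrow> real^'n \<Rightarrow> bool" where
  "obj_stop Q \<delta> F b \<longleftrightarrow>
     Q b - (INF p \<in> {(\<alpha>::real, j). j \<notin> F}. Q (b + fst p *\<^sub>R e (snd p))) < \<delta>"

definition drop_val :: "(real^'n::finite \<Rightarrow> real) \<Rightarrow> real^'n \<Rightarrow> 'n \<Rightarrow> real" where
  "drop_val Q b i = Q (b - (b $ i) *\<^sub>R e i)"

text \<open>States (F, beta, dl): current support set F = F^(k) (k = card F), current iterate
  beta = beta^(k), and dl j = delta^(j), the value recorded at the most recent forward step
  producing index j.  foba_begin holds for states at the beginning of an iteration
  (just before a stopping test); foba_back for states inside the backward step.\<close>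
inductive foba_begin :: "(real^'n::finite \<Rightarrow> real) \<Rightarrow> real \<Rightarrow> 'n set \<times> (real^'n) \<times> (nat \<Rightarrow> real) \<Rightarrow> bool"
  and foba_back :: "(real^'n::finite \<Rightarrow> real) \<Rightarrow> real \<Rightarrow> 'n set \<times> (real^'n) \<times> (nat \<Rightarrow> real) \<Rightarrow> bool"
  for Q :: "real^'n \<Rightarrow> real" and \<delta> :: real
  where
  init: "foba_begin Q \<delta> ({}, 0, \<lambda>_. 0)"
| forward: "\<lbrakk> foba_begin Q \<delta> (F, b, dl); \<not> obj_stop Q \<delta> F b;
              i \<notin> F; \<forall>l. l \<notin> F \<longrightarrow> line_min Q b i \<le> line_min Q b l;
              restr_min Q (insert i F) b' \<rbrakk>
           \<Longrightarrow> foba_back Q \<delta> (insert i F, b', dl(card F + 1 := Q b - Q b'))"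
| backward: "\<lbrakk> foba_back Q \<delta> (F, b, dl); F \<noteq> {};
               (MIN i\<in>F. drop_val Q b i) - Q b < dl (card F) / 2;
               j \<in> F; \<forall>i\<in>F. drop_val Q b j \<le> drop_val Q b i;
               restr_min Q (F - {j}) b' \<rbrakk>
           \<Longrightarrow> foba_back Q \<delta> (F - {j}, b', dl)"
| leave: "\<lbrakk> foba_back Q \<delta> (F, b, dl);
            F = {} \<or> (MIN i\<in>F. drop_val Q b i) - Q b \<ge> dl (card F) / 2 \<rbrakk>
           \<Longrightarrow> foba_begin Q \<delta> (F, b, dl)"

end

theory Submission
  imports Defs
begin

text \<open>Every state reached by FoBa-obj is a restricted minimizer of Q on its support set, and every
  recorded forward gain is at least \<delta>, because a forward step is taken only when the stopping test
  fails.  At a minimizer the partial derivatives on F vanish, so restricted strong smoothness bounds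
  the loss from deleting coordinate i by \<rho>+(1)/2 * b_i^2; the exit condition of the backward step says
  this loss is at least \<delta>^(k)/2.  Summing b_i^2 \<ge> \<delta>^(k)/\<rho>+(1) over F - supp bbar, where bbar vanishes,
  gives the claim.\<close>

lemma l0_scaleR_e: "l0 (t *\<^sub>R e i) \<le> 1"
proof -
  have "supp (t *\<^sub>R e i) \<subseteq> {i}" by (auto simp: supp_def e_def axis_def)
  hence "card (supp (t *\<^sub>R e i)) \<le> card {i}" by (intro card_mono) auto
  thus ?thesis by (simp add: l0_def)
qed

lemma inner_scaleR_e: "g \<bullet> (t *\<^sub>R e i) = t * g $ i"
  by (simp add: e_def inner_axis)

lemma norm_scaleR_e_square: "(norm (t *\<^sub>R e i))\<^sup>2 = t\<^sup>2"
  by (simp add: e_def power_mult_distrib)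

lemma supp_add_scaleR_e: "supp (b + t *\<^sub>R e i) \<subseteq> insert i (supp b)"
  by (auto simp: supp_def e_def axis_def)

lemma rsc_coordinate_bounds:
  assumes "rsc Q gQ 1 rm rp"
  shows "Q b + t * gQ b $ i + rm / 2 * t\<^sup>2 \<le> Q (b + t *\<^sub>R e i)"
    and "Q (b + t *\<^sub>R e i) \<le> Q b + t * gQ b $ i + rp / 2 * t\<^sup>2"
proof -
  have "l0 ((b + t *\<^sub>R e i) - b) \<le> 1" using l0_scaleR_e by simp
  with assms have "rm / 2 * (norm ((b + t *\<^sub>R e i) - b))\<^sup>2
      \<le> Q (b + t *\<^sub>R e i) - Q b - gQ b \<bullet> ((b + t *\<^sub>R e i) - b)
    \<and> Q (b + t *\<^sub>R e i) - Q b - gQ b \<bullet> ((b + t *\<^sub>R e i) - b)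
      \<le> rp / 2 * (norm ((b + t *\<^sub>R e i) - b))\<^sup>2"
    unfolding rsc_def by blast
  thus "Q b + t * gQ b $ i + rm / 2 * t\<^sup>2 \<le> Q (b + t *\<^sub>R e i)"
    and "Q (b + t *\<^sub>R e i) \<le> Q b + t * gQ b $ i + rp / 2 * t\<^sup>2"
    unfolding add_diff_cancel_left' inner_scaleR_e norm_scaleR_e_square by simp_all
qed

lemma rsc_line_bdd_below:
  assumes "rsc Q gQ 1 rm rp"
  shows "bdd_below (range (\<lambda>\<alpha>. Q (b + \<alpha> *\<^sub>R e i)))"
proof -
  let ?g = "gQ b $ i"
  have rm: "rm > 0" using assms by (simp add: rsc_def)
  have "Q b - ?g\<^sup>2 / (2 * rm) \<le> Q (b + t *\<^sub>R e i)" for t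
  proof -
    have "0 \<le> (rm * t + ?g)\<^sup>2 / (2 * rm)" using rm by simp
    hence "- ?g\<^sup>2 / (2 * rm) \<le> t * ?g + rm / 2 * t\<^sup>2"
      using rm by (simp add: field_simps power2_eq_square)
    thus ?thesis using rsc_coordinate_bounds(1)[OF assms, of b t i] by linarith
  qed
  thus ?thesis by (intro bdd_belowI2) auto
qed

lemma restr_min_gradient_zero:
  assumes "rsc Q gQ 1 rm rp" "restr_min Q F b" "i \<in> F"
  shows "gQ b $ i = 0"
proof -
  let ?g = "gQ b $ i"
  have rp: "rp > 0" using assms(1) by (simp add: rsc_def)
  define t where "t = - ?g / rp"
  have "supp (b + t *\<^sub>R e i) \<subseteq> F"
    using supp_add_scaleR_e[of b t i] assms(2,3) by (auto simp: restr_min_def)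
  hence "Q b \<le> Q (b + t *\<^sub>R e i)" using assms(2) by (simp add: restr_min_def)
  hence "0 \<le> t * ?g + rp / 2 * t\<^sup>2"
    using rsc_coordinate_bounds(2)[OF assms(1), of b t i] by linarith
  hence "0 \<le> - ?g\<^sup>2 / (2 * rp)" using rp by (simp add: t_def field_simps power2_eq_square)
  hence "?g\<^sup>2 \<le> 0" using rp by (simp add: divide_le_0_iff)
  thus ?thesis by simp
qed

lemma restr_min_drop_val_le:
  assumes "rsc Q gQ 1 rm rp" "restr_min Q F b" "i \<in> F"
  shows "drop_val Q b i \<le> Q b + rp / 2 * (b $ i)\<^sup>2"
  using rsc_coordinate_bounds(2)[OF assms(1), of b "- b $ i" i]
    restr_min_gradient_zero[OF assms]
  by (simp add: drop_val_def)

lemma restr_min_empty: "restr_min Q {} 0"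
proof -
  have "b = 0" if "supp b \<subseteq> {}" for b :: "real^'n::finite"
    using that by (auto simp: supp_def vec_eq_iff)
  thus ?thesis by (auto simp: restr_min_def supp_def)
qed

text \<open>The minimum over the enlarged support is at most the best single-coordinate line minimum,
  which the failed stopping test places at least \<delta> below Q b.\<close>
lemma forward_gain_ge:
  assumes rsc: "rsc Q gQ 1 rm rp"
    and continue: "\<not> obj_stop Q \<delta> F b"
    and supp_b: "supp b \<subseteq> F"
    and best: "\<forall>l. l \<notin> F \<longrightarrow> line_min Q b i \<le> line_min Q b l"
    and new: "restr_min Q (insert i F) b'"
    and i_new: "i \<notin> F"
  shows "\<delta> \<le> Q b - Q b'"
proof -
  have "Q b' \<le> Q (b + \<alpha> *\<^sub>R e i)" for \<alpha>
  proof -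
    have "supp (b + \<alpha> *\<^sub>R e i) \<subseteq> insert i F" using supp_add_scaleR_e[of b \<alpha> i] supp_b by blast
    thus ?thesis using new by (simp add: restr_min_def)
  qed
  hence b'_le_line: "Q b' \<le> line_min Q b i"
    unfolding line_min_def by (intro cINF_greatest) auto
  have "Q b' \<le> Q (b + \<alpha> *\<^sub>R e l)" if "l \<notin> F" for \<alpha> l
  proof -
    have "line_min Q b l \<le> Q (b + \<alpha> *\<^sub>R e l)"
      unfolding line_min_def by (rule cINF_lower[OF rsc_line_bdd_below[OF rsc]]) simp
    thus ?thesis using b'_le_line best that by fastforce
  qed
  hence "Q b' \<le> (INF p \<in> {(\<alpha>::real, j). j \<notin> F}. Q (b + fst p *\<^sub>R e (snd p)))"
    using i_new by (intro cINF_greatest) auto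
  thus ?thesis using continue by (simp add: obj_stop_def)
qed

lemma foba_invariant:
  assumes rsc: "rsc Q gQ 1 rm rp"
  shows "foba_begin Q \<delta> s \<Longrightarrow>
           (\<lambda>(F, b, dl). restr_min Q F b \<and> (\<forall>j\<in>{1..card F}. \<delta> \<le> dl j)) s"
    and "foba_back Q \<delta> s \<Longrightarrow>
           (\<lambda>(F, b, dl). restr_min Q F b \<and> (\<forall>j\<in>{1..card F}. \<delta> \<le> dl j)) s"
proof (induction rule: foba_begin_foba_back.inducts)
  case init
  show ?case by (simp add: restr_min_empty)
next
  case (forward F b dl i b')
  hence "\<delta> \<le> Q b - Q b'"
    using forward_gain_ge[OF rsc] by (auto simp: restr_min_def)
  with forward show ?case by auto
next
  case (backward F b dl j b')
  have "card (F - {j}) \<le> card F" by (simp add: card_mono)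
  with backward show ?case by auto
qed

lemma foba_begin_coordinate_ge:
  assumes rsc: "rsc Q gQ 1 rm rp"
    and state: "foba_begin Q \<delta> (F, b, dl)"
    and i: "i \<in> F"
  shows "dl (card F) / rp \<le> (b $ i)\<^sup>2"
proof -
  have rp: "rp > 0" using rsc by (simp add: rsc_def)
  have min: "restr_min Q F b" using foba_invariant(1)[OF rsc state] by simp
  have "dl (card F) / 2 \<le> (MIN i\<in>F. drop_val Q b i) - Q b"
    using state i by (cases rule: foba_begin.cases) auto
  also have "\<dots> \<le> drop_val Q b i - Q b" using i by simp
  also have "\<dots> \<le> rp / 2 * (b $ i)\<^sup>2" using restr_min_drop_val_le[OF rsc min i] by simp
  finally show ?thesis using rp by (simp add: field_simps)
qed

theorem mainTheorem8:
  fixes Q :: "real^'n::finite \<Rightarrow> real" and gQ :: "real^'n \<Rightarrow> real^'n"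
    and \<delta> rm1 rp1 :: real and F :: "'n set" and b bbar :: "real^'n" and dl :: "nat \<Rightarrow> real"
  assumes convex: "convex_on UNIV Q"
    and grad: "\<And>x. (Q has_derivative (\<lambda>h. gQ x \<bullet> h)) (at x)"
    and grad_cont: "continuous_on UNIV gQ"
    and minimizers_exist: "\<And>G. \<exists>c. restr_min Q G c"
    and rsc1: "rsc Q gQ 1 rm1 rp1"
    and delta_pos: "\<delta> > 0"
    and state: "foba_begin Q \<delta> (F, b, dl)"
    and k_ge_1: "card F \<ge> 1"
  shows "(\<Sum>j\<in>F - supp bbar. (b $ j)\<^sup>2) = (\<Sum>j\<in>F - supp bbar. ((b - bbar) $ j)\<^sup>2)
       \<and> (\<Sum>j\<in>F - supp bbar. ((b - bbar) $ j)\<^sup>2) \<ge> dl (card F) / rp1 * real (card (F - supp bbar))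
       \<and> dl (card F) / rp1 * real (card (F - supp bbar)) \<ge> \<delta> / rp1 * real (card (F - supp bbar))"
proof -
  have rp: "rp1 > 0" using rsc1 by (simp add: rsc_def)
  have dl_ge: "\<delta> \<le> dl (card F)" using foba_invariant(1)[OF rsc1 state] k_ge_1 by simp
  have same: "(\<Sum>j\<in>F - supp bbar. (b $ j)\<^sup>2) = (\<Sum>j\<in>F - supp bbar. ((b - bbar) $ j)\<^sup>2)"
    by (rule sum.cong) (auto simp: supp_def)
  have "dl (card F) / rp1 * real (card (F - supp bbar)) = (\<Sum>j\<in>F - supp bbar. dl (card F) / rp1)"
    by simp
  also have "\<dots> \<le> (\<Sum>j\<in>F - supp bbar. (b $ j)\<^sup>2)"
    by (intro sum_mono foba_begin_coordinate_ge[OF rsc1 state]) simp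
  finally have "dl (card F) / rp1 * real (card (F - supp bbar)) \<le> (\<Sum>j\<in>F - supp bbar. (b $ j)\<^sup>2)" .
  moreover have "\<delta> / rp1 * real (card (F - supp bbar)) \<le> dl (card F) / rp1 * real (card (F - supp bbar))"
    using dl_ge rp by (intro mult_right_mono divide_right_mono) auto
  ultimately show ?thesis using same by simp
qed

end
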